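(* Let $N$ be finite, $\mathbf P$ stochastic on $N$, $0<\beta<1$, $\mathbf R\in\mathbb R^N$, $S\subseteq N$ and $j\in S^c$. Then $a^S_{jj}\neq 0$, and with $T=S^c\setminus\{j\}$: $$\mathbf A^{S\cup\{j\}}_{T,S}=\mathbf A^S_{T,S}-\frac{\mathbf A^S_{T,j}\mathbf A^S_{j,S}}{a^S_{jj}},\qquad \mathbf A^{S\cup\{j\}}_{T,j}=\frac{\mathbf A^S_{T,j}}{a^S_{jj}},$$ $$\mathbf w^{S\cup\{j\}}_S=\mathbf w^S_S+\frac{w^S_j}{a^S_{jj}}\mathbf A^S_{S,j},\qquad w^{S\cup\{j\}}_j=\frac{w^S_j}{a^S_{jj}},\qquad \mathbf w^{S\cup\{j\}}_T=\mathbf w^S_T-\frac{w^S_j}{a^S_{jj}}\mathbf A^S_{T,j},$$ and the same three identities hold with $\mathbf w$ replaced by $\mathbf r$ throughout.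
   Context: $N$ finite, $\mathbf P=(p_{ij})$ stochastic, $\beta\in(0,1)$, $\mathbf R=(R_j)$; submatrices such as $\mathbf A^S_{T,S}$ use row set $T$ and column set $S$, and $a^S_{ij}$ are the entries of $\mathbf A^S$; $S^c=N\setminus S$. Define $$\mathbf P^S=\begin{bmatrix}\mathbf P_{SS}&\mathbf P_{SS^c}\\\mathbf 0&\mathbf I_{S^c}\end{bmatrix},\ \mathbf P^{S^c}=\begin{bmatrix}\mathbf I_S&\mathbf 0\\\mathbf P_{S^cS}&\mathbf P_{S^cS^c}\end{bmatrix},\ \mathbf A^S=(\mathbf I-\beta\mathbf P^{S^c})(\mathbf I-\beta\mathbf P^S)^{-1}.$$ With $X(t)$ the Markov chain with matrix $\mathbf P$, $\mathsf E_i$ expectation given $X(0)=i$, and $\tau_S=\min\{t\ge0:X(t)\notin S\}$: $f_i^S=\mathsf{E}_i[\sum_{t=0}^{\tau_S-1}R_{X(t)}\beta^t]$, $g_i^S=\mathsf{E}_i[\sum_{t=0}^{\tau_S-1}\beta^t]$, $w_i^S=1+\beta\sum_kp_{ik}g_k^S-\beta g_i^S$, $r_i^S=R_i+\beta\sum_kp_{ik}f_k^S-\beta f_i^S$; $\mathbf w^S,\mathbf r^S$ are the column vectors of these, and subscripts denote sub-vectors. *)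

theory Defs
  imports "HOL-Analysis.Analysis"
begin

text \<open>The finite state space N is the finite type 'n (N = UNIV).
  Matrices are real^'n^'n, vectors are functions 'n \<Rightarrow> real.\<close>

definition stochastic :: "real^'n^'n \<Rightarrow> bool" where
  "stochastic P \<longleftrightarrow> (\<forall>i k. P $ i $ k \<ge> 0) \<and> (\<forall>i. (\<Sum>k\<in>UNIV. P $ i $ k) = 1)"

definition PS :: "real^'n^'n \<Rightarrow> 'n set \<Rightarrow> real^'n^'n" where
  "PS P S = (\<chi> i k. if i \<in> S then P $ i $ k else (if i = k then 1 else 0))"

definition AS :: "real^'n^'n \<Rightarrow> real \<Rightarrow> 'n set \<Rightarrow> real^'n^'n" where
  "AS P \<beta> S = (mat 1 - \<beta> *\<^sub>R PS P (- S)) ** matrix_inv (mat 1 - \<beta> *\<^sub>R PS P S)"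

text \<open>Trajectories X(0..t) = xs (length t+1) starting at i and staying in S
  up to time t (i.e. t < tau_S), with their probability under P.\<close>
definition paths_in :: "'n set \<Rightarrow> 'n \<Rightarrow> nat \<Rightarrow> 'n list set" where
  "paths_in S i t = {xs. length xs = Suc t \<and> xs ! 0 = i \<and> set xs \<subseteq> S}"

definition path_prob :: "real^'n^'n \<Rightarrow> 'n list \<Rightarrow> real" where
  "path_prob P xs = (\<Prod>k<length xs - 1. P $ (xs ! k) $ (xs ! Suc k))"

text \<open>f^S_i = E_i[ sum_{t<tau_S} R_{X(t)} beta^t ], written out via linearity as
  sum_t beta^t E_i[R_{X(t)} 1{t < tau_S}].\<close>
definition fS :: "real^'n^'n \<Rightarrow> real \<Rightarrow> ('n \<Rightarrow> real) \<Rightarrow> 'n set \<Rightarrow> 'n \<Rightarrow> real" where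
  "fS P \<beta> R S i = (\<Sum>t. \<beta> ^ t * (\<Sum>xs\<in>paths_in S i t. path_prob P xs * R (xs ! t)))"

definition gS :: "real^'n^'n \<Rightarrow> real \<Rightarrow> 'n set \<Rightarrow> 'n \<Rightarrow> real" where
  "gS P \<beta> S i = fS P \<beta> (\<lambda>_. 1) S i"

definition wS :: "real^'n^'n \<Rightarrow> real \<Rightarrow> 'n set \<Rightarrow> 'n \<Rightarrow> real" where
  "wS P \<beta> S i = 1 + \<beta> * (\<Sum>k\<in>UNIV. P $ i $ k * gS P \<beta> S k) - \<beta> * gS P \<beta> S i"

definition rS :: "real^'n^'n \<Rightarrow> real \<Rightarrow> ('n \<Rightarrow> real) \<Rightarrow> 'n set \<Rightarrow> 'n \<Rightarrow> real" where
  "rS P \<beta> R S i = R i + \<beta> * (\<Sum>k\<in>UNIV. P $ i $ k * fS P \<beta> R S k) - \<beta> * fS P \<beta> R S i"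

end

theory Submission imports Defs begin

text \<open>Write \<open>M\<^sub>S = I - \<beta> P\<^sup>S\<close>. Since \<open>P\<close> is stochastic and \<open>\<beta> < 1\<close>, a maximum principle
  makes \<open>M\<^sub>S\<close> injective, so the quantities of the theorem are unique solutions of linear
  systems: the columns \<open>c\<^sub>k\<close> of \<open>M\<^sub>S\<^sup>-\<^sup>1\<close> solve \<open>M\<^sub>S c\<^sub>k = e\<^sub>k\<close>, \<open>f\<^sup>S\<close> solves
  \<open>M\<^sub>S f = R 1\<^sub>S\<close>, and \<open>A\<^sup>S\<close>, \<open>r\<^sup>S\<close> arise from these by applying \<open>I - \<beta> P\<^sup>S\<^sup>c\<close>.
  Adding \<open>j\<close> to \<open>S\<close> changes \<open>M\<^sub>S\<close> only in row \<open>j\<close>, and the new operator maps \<open>c\<^sub>j\<close> to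
  \<open>a\<^sup>S\<^sub>j\<^sub>j e\<^sub>j\<close> with \<open>a\<^sup>S\<^sub>j\<^sub>j \<noteq> 0\<close>. So every new solution is the old one plus a multiple of
  \<open>c\<^sub>j\<close>, and applying \<open>I - \<beta> P\<^sup>S\<^sup>c\<close> to this rank-one correction gives the pivoting
  formulas.\<close>

definition stopped_op :: "real^'n^'n \<Rightarrow> real \<Rightarrow> 'n set \<Rightarrow> ('n \<Rightarrow> real) \<Rightarrow> 'n \<Rightarrow> real" where
  "stopped_op P \<beta> S x i =
     (if i \<in> S then x i - \<beta> * (\<Sum>l\<in>UNIV. P $ i $ l * x l) else (1 - \<beta>) * x i)"

definition resolvent :: "real^'n^'n \<Rightarrow> real \<Rightarrow> 'n set \<Rightarrow> real^'n^'n" where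
  "resolvent P \<beta> S = matrix_inv (mat 1 - \<beta> *\<^sub>R PS P S)"

lemma stopped_op_add_scaled:
  "stopped_op P \<beta> S (\<lambda>l. x l + a * y l) i = stopped_op P \<beta> S x i + a * stopped_op P \<beta> S y i"
  by (simp add: stopped_op_def algebra_simps sum.distrib sum_distrib_left)

lemma stopped_op_diff:
  "stopped_op P \<beta> S (\<lambda>l. x l - y l) i = stopped_op P \<beta> S x i - stopped_op P \<beta> S y i"
  using stopped_op_add_scaled[of P \<beta> S x "-1" y i] by simp

lemma stopped_op_scale: "stopped_op P \<beta> S (\<lambda>l. a * x l) i = a * stopped_op P \<beta> S x i"
  using stopped_op_add_scaled[of P \<beta> S "\<lambda>_. 0" a x i] by (simp add: stopped_op_def)

lemma stopped_op_cong_mem: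
  "(i \<in> S \<longleftrightarrow> i \<in> S') \<Longrightarrow> stopped_op P \<beta> S x i = stopped_op P \<beta> S' x i"
  by (simp add: stopped_op_def)

lemma stopped_op_insert_other:
  "i \<noteq> j \<Longrightarrow> stopped_op P \<beta> (insert j S) x i = stopped_op P \<beta> S x i"
  by (simp add: stopped_op_def)

lemma stopped_op_compl_insert:
  "i \<noteq> j \<Longrightarrow> stopped_op P \<beta> (- insert j S) x i = stopped_op P \<beta> (- S) x i"
  by (simp add: stopped_op_def)

lemma stopped_matrix_mult_vec:
  "((mat 1 - \<beta> *\<^sub>R PS P S) *v x) $ i = stopped_op P \<beta> S (\<lambda>l. x $ l) i"
proof -
  have "((mat 1 - \<beta> *\<^sub>R PS P S) *v x) $ i = x $ i - \<beta> * (\<Sum>l\<in>UNIV. PS P S $ i $ l * x $ l)"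
    by (simp add: matrix_vector_mult_def mat_def left_diff_distrib sum_subtractf
        sum_distrib_left mult.assoc if_distrib[of "\<lambda>u. u * _"] cong: if_cong)
  also have "\<dots> = stopped_op P \<beta> S (\<lambda>l. x $ l) i"
    by (cases "i \<in> S")
      (simp_all add: stopped_op_def PS_def if_distrib[of "\<lambda>u. u * _"] if_distrib[of "\<lambda>u. _ * u"]
        sum.delta algebra_simps cong: if_cong)
  finally show ?thesis .
qed

lemma stopped_matrix_mult:
  "((mat 1 - \<beta> *\<^sub>R PS P S) ** X) $ i $ k = stopped_op P \<beta> S (\<lambda>l. X $ l $ k) i"
proof -
  have "((mat 1 - \<beta> *\<^sub>R PS P S) ** X) $ i $ k = ((mat 1 - \<beta> *\<^sub>R PS P S) *v (\<chi> l. X $ l $ k)) $ i"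
    by (simp add: matrix_matrix_mult_def matrix_vector_mult_def)
  then show ?thesis by (simp add: stopped_matrix_mult_vec)
qed

lemma AS_entry: "AS P \<beta> S $ i $ k = stopped_op P \<beta> (- S) (\<lambda>l. resolvent P \<beta> S $ l $ k) i"
  unfolding AS_def resolvent_def by (rule stopped_matrix_mult)

lemma stochastic_row_abs_le:
  assumes "stochastic P" and "\<And>l. \<bar>z l\<bar> \<le> m"
  shows "\<bar>\<Sum>l\<in>UNIV. P $ i $ l * z l\<bar> \<le> m"
proof -
  have "\<bar>\<Sum>l\<in>UNIV. P $ i $ l * z l\<bar> \<le> (\<Sum>l\<in>UNIV. P $ i $ l * m)"
    using assms unfolding stochastic_def
    by (intro order.trans[OF sum_abs] sum_mono) (simp add: abs_mult mult_left_mono)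
  also have "\<dots> = m"
    using assms(1) unfolding stochastic_def by (simp add: sum_distrib_right[symmetric])
  finally show ?thesis .
qed

definition stopped_reward :: "real^'n^'n \<Rightarrow> ('n \<Rightarrow> real) \<Rightarrow> 'n set \<Rightarrow> nat \<Rightarrow> 'n \<Rightarrow> real" where
  "stopped_reward P R S t i = (\<Sum>xs\<in>paths_in S i t. path_prob P xs * R (xs ! t))"

lemma finite_paths_in: "finite (paths_in S (i::'n::finite) t)"
proof (rule finite_subset)
  show "paths_in S i t \<subseteq> {xs. set xs \<subseteq> UNIV \<and> length xs = Suc t}"
    by (auto simp: paths_in_def)
  show "finite {xs. set xs \<subseteq> (UNIV::'n set) \<and> length xs = Suc t}"
    by (rule finite_lists_length_eq) simp
qed

lemma paths_in_nonmem: "i \<notin> S \<Longrightarrow> paths_in S i t = {}"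
  unfolding paths_in_def by auto (metis nth_mem subsetD zero_less_Suc)

lemma paths_in_0: "i \<in> S \<Longrightarrow> paths_in S i 0 = {[i]}"
  unfolding paths_in_def by (auto simp: length_Suc_conv)

lemma paths_in_Suc: "i \<in> S \<Longrightarrow> paths_in S i (Suc t) = (\<lambda>ys. i # ys) ` (\<Union>k. paths_in S k t)"
proof
  assume "i \<in> S"
  show "paths_in S i (Suc t) \<subseteq> (\<lambda>ys. i # ys) ` (\<Union>k. paths_in S k t)"
  proof
    fix xs assume "xs \<in> paths_in S i (Suc t)"
    then obtain ys where xs: "xs = i # ys" "length ys = Suc t" "set ys \<subseteq> S"
      unfolding paths_in_def by (cases xs) auto
    then have "ys \<in> paths_in S (ys ! 0) t" unfolding paths_in_def by auto
    then show "xs \<in> (\<lambda>ys. i # ys) ` (\<Union>k. paths_in S k t)" using xs by blast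
  qed
  show "(\<lambda>ys. i # ys) ` (\<Union>k. paths_in S k t) \<subseteq> paths_in S i (Suc t)"
    using \<open>i \<in> S\<close> unfolding paths_in_def by auto
qed

lemma path_prob_Cons:
  "length ys = Suc t \<Longrightarrow> path_prob P (i # ys) = P $ i $ (ys ! 0) * path_prob P ys"
  unfolding path_prob_def by (simp add: prod.lessThan_Suc_shift del: prod.lessThan_Suc)

lemma stopped_reward_0: "stopped_reward P R S 0 i = (if i \<in> S then R i else 0)"
  by (simp add: stopped_reward_def paths_in_0 paths_in_nonmem path_prob_def)

lemma stopped_reward_nonmem: "i \<notin> S \<Longrightarrow> stopped_reward P R S t i = 0"
  by (simp add: stopped_reward_def paths_in_nonmem)

lemma stopped_reward_Suc:
  assumes "i \<in> S"
  shows "stopped_reward P R S (Suc t) i = (\<Sum>k\<in>UNIV. P $ i $ k * stopped_reward P R S t k)"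
proof -
  have "stopped_reward P R S (Suc t) i =
      (\<Sum>ys\<in>(\<Union>k. paths_in S k t). path_prob P (i # ys) * R ((i # ys) ! Suc t))"
    unfolding stopped_reward_def paths_in_Suc[OF assms]
    by (subst sum.reindex) (auto simp: inj_on_def)
  also have "\<dots> = (\<Sum>k\<in>UNIV. \<Sum>ys\<in>paths_in S k t. path_prob P (i # ys) * R ((i # ys) ! Suc t))"
    by (rule sum.UNION_disjoint) (simp_all add: finite_paths_in, auto simp: paths_in_def)
  also have "\<dots> = (\<Sum>k\<in>UNIV. P $ i $ k * stopped_reward P R S t k)"
    unfolding stopped_reward_def sum_distrib_left
    by (intro sum.cong refl) (auto simp: paths_in_def path_prob_Cons)
  finally show ?thesis .
qed

lemma stopped_reward_abs_le:
  assumes "stochastic P"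
  shows "\<bar>stopped_reward P R S t i\<bar> \<le> (\<Sum>k\<in>UNIV. \<bar>R k\<bar>)"
proof (induction t arbitrary: i)
  case 0
  have "\<bar>R i\<bar> \<le> (\<Sum>k\<in>UNIV. \<bar>R k\<bar>)" by (rule member_le_sum) auto
  then show ?case by (simp add: stopped_reward_0 sum_nonneg)
next
  case (Suc t)
  then show ?case
    using stochastic_row_abs_le[OF assms Suc.IH]
    by (cases "i \<in> S") (simp_all add: stopped_reward_Suc stopped_reward_nonmem sum_nonneg)
qed

lemma fS_eq_suminf_stopped_reward: "fS P \<beta> R S i = (\<Sum>t. \<beta> ^ t * stopped_reward P R S t i)"
  by (simp add: fS_def stopped_reward_def)

locale discounted_chain =
  fixes P :: "real^'n^'n" and \<beta> :: real
  assumes stochastic: "stochastic P" and discount_nonneg: "0 \<le> \<beta>" and discount_less_1: "\<beta> < 1"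
begin

lemma stopped_op_eq_0_imp_eq_0:
  assumes z: "\<And>i. stopped_op P \<beta> S z i = 0"
  shows "z = (\<lambda>_. 0)"
proof -
  define m where "m = Max (range (\<lambda>i. \<bar>z i\<bar>))"
  have le_m: "\<bar>z k\<bar> \<le> m" for k unfolding m_def by (rule Max_ge) auto
  have "m \<in> range (\<lambda>i. \<bar>z i\<bar>)" unfolding m_def by (rule Max_in) auto
  then obtain i0 where i0: "\<bar>z i0\<bar> = m" by auto
  have "m \<le> 0"
  proof (cases "i0 \<in> S")
    case True
    with z[of i0] have "z i0 = \<beta> * (\<Sum>l\<in>UNIV. P $ i0 $ l * z l)" by (simp add: stopped_op_def)
    then have "m = \<beta> * \<bar>\<Sum>l\<in>UNIV. P $ i0 $ l * z l\<bar>"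
      using i0 discount_nonneg by (simp add: abs_mult)
    also have "\<dots> \<le> \<beta> * m"
      using stochastic_row_abs_le[OF stochastic, of z m, OF le_m] discount_nonneg
      by (rule mult_left_mono)
    finally have "m \<le> \<beta> * m" .
    then show ?thesis using discount_less_1 by (metis mult_le_cancel_right1 not_less)
  next
    case False
    with z[of i0] discount_less_1 have "z i0 = 0" by (simp add: stopped_op_def)
    then show ?thesis using i0 by simp
  qed
  then show ?thesis using le_m by (auto intro!: ext) (metis abs_le_zero_iff order.trans)
qed

lemma stopped_op_inj:
  assumes "\<And>i. stopped_op P \<beta> S x i = stopped_op P \<beta> S y i"
  shows "x = y"
proof -
  have "(\<lambda>l. x l - y l) = (\<lambda>_. 0)"
    by (rule stopped_op_eq_0_imp_eq_0[of S]) (simp add: stopped_op_diff assms)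
  then show ?thesis by (auto simp: fun_eq_iff dest: fun_cong)
qed

lemma invertible_stopped_matrix: "invertible (mat 1 - \<beta> *\<^sub>R PS P S)"
proof -
  have "inj ((*v) (mat 1 - \<beta> *\<^sub>R PS P S))"
  proof (rule injI)
    fix x y assume "(mat 1 - \<beta> *\<^sub>R PS P S) *v x = (mat 1 - \<beta> *\<^sub>R PS P S) *v y"
    then have "stopped_op P \<beta> S (\<lambda>l. x $ l) i = stopped_op P \<beta> S (\<lambda>l. y $ l) i" for i
      by (metis stopped_matrix_mult_vec)
    then have "(\<lambda>l. x $ l) = (\<lambda>l. y $ l)" by (rule stopped_op_inj)
    then show "x = y" by (simp add: vec_eq_iff fun_eq_iff)
  qed
  then show ?thesis by (simp add: invertible_left_inverse matrix_left_invertible_injective)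
qed

lemma stopped_op_resolvent:
  "stopped_op P \<beta> S (\<lambda>l. resolvent P \<beta> S $ l $ k) i = (if i = k then 1 else 0)"
proof -
  have "(mat 1 - \<beta> *\<^sub>R PS P S) ** resolvent P \<beta> S = mat 1"
    using someI_ex[OF invertible_stopped_matrix[of S, unfolded invertible_def]]
    unfolding matrix_inv_def resolvent_def by blast
  then have "((mat 1 - \<beta> *\<^sub>R PS P S) ** resolvent P \<beta> S) $ i $ k = mat 1 $ i $ k"
    by simp
  then show ?thesis unfolding stopped_matrix_mult by (simp add: mat_def)
qed

lemma resolvent_diag_nonmem: "k \<notin> S \<Longrightarrow> resolvent P \<beta> S $ k $ k = 1 / (1 - \<beta>)"
  using stopped_op_resolvent[of S k k] discount_less_1 by (simp add: stopped_op_def field_simps)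

lemma summable_stopped_reward: "summable (\<lambda>t. \<beta> ^ t * stopped_reward P R S t i)"
proof (rule summable_comparison_test')
  show "summable (\<lambda>t. (\<Sum>k\<in>UNIV. \<bar>R k\<bar>) * \<beta> ^ t)"
    using discount_nonneg discount_less_1 by (intro summable_mult summable_geometric) simp
  show "norm (\<beta> ^ t * stopped_reward P R S t i) \<le> (\<Sum>k\<in>UNIV. \<bar>R k\<bar>) * \<beta> ^ t" for t
  proof -
    have "norm (\<beta> ^ t * stopped_reward P R S t i) = \<beta> ^ t * \<bar>stopped_reward P R S t i\<bar>"
      using discount_nonneg by (simp add: abs_mult)
    also have "\<dots> \<le> \<beta> ^ t * (\<Sum>k\<in>UNIV. \<bar>R k\<bar>)"
      using discount_nonneg by (intro mult_left_mono stopped_reward_abs_le[OF stochastic]) simp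
    finally show ?thesis by (simp add: mult.commute)
  qed
qed

lemma fS_fixpoint:
  "fS P \<beta> R S i = (if i \<in> S then R i + \<beta> * (\<Sum>k\<in>UNIV. P $ i $ k * fS P \<beta> R S k) else 0)"
proof (cases "i \<in> S")
  case True
  note summable = summable_stopped_reward[of R S]
  have "fS P \<beta> R S i - R i = (\<Sum>t. \<beta> ^ Suc t * stopped_reward P R S (Suc t) i)"
    unfolding fS_eq_suminf_stopped_reward using suminf_split_head[OF summable] True
    by (simp add: stopped_reward_0)
  also have "\<dots> = (\<Sum>t. \<beta> * (\<Sum>k\<in>UNIV. P $ i $ k * (\<beta> ^ t * stopped_reward P R S t k)))"
    using True by (simp add: stopped_reward_Suc sum_distrib_left algebra_simps)
  also have "\<dots> = \<beta> * (\<Sum>t. \<Sum>k\<in>UNIV. P $ i $ k * (\<beta> ^ t * stopped_reward P R S t k))"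
    by (rule suminf_mult) (intro summable_sum summable_mult summable)
  also have "\<dots> = \<beta> * (\<Sum>k\<in>UNIV. \<Sum>t. P $ i $ k * (\<beta> ^ t * stopped_reward P R S t k))"
    by (subst suminf_sum) (intro summable_mult summable, rule refl)
  also have "\<dots> = \<beta> * (\<Sum>k\<in>UNIV. P $ i $ k * fS P \<beta> R S k)"
    unfolding fS_eq_suminf_stopped_reward by (simp add: suminf_mult summable)
  finally show ?thesis using True by simp
next
  case False
  then show ?thesis by (simp add: fS_eq_suminf_stopped_reward stopped_reward_nonmem)
qed

lemma stopped_op_fS: "stopped_op P \<beta> S (fS P \<beta> R S) i = (if i \<in> S then R i else 0)"
  using fS_fixpoint[of R S i] fS_fixpoint[of R S] by (auto simp: stopped_op_def)

lemma rS_eq_stopped_op: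
  "rS P \<beta> R S i = (if i \<in> S then stopped_op P \<beta> (- S) (fS P \<beta> R S) i
                     else R i - stopped_op P \<beta> (- S) (fS P \<beta> R S) i)"
  using fS_fixpoint[of R S i] by (auto simp: rS_def stopped_op_def algebra_simps)

context
  fixes S :: "'n set" and j :: 'n
  assumes j_nonmem: "j \<notin> S"
begin

lemma stopped_op_insert_resolvent:
  "stopped_op P \<beta> (insert j S) (\<lambda>l. resolvent P \<beta> S $ l $ j) i
     = (if i = j then AS P \<beta> S $ j $ j else 0)"
  using j_nonmem
  by (simp add: AS_entry stopped_op_insert_other stopped_op_resolvent stopped_op_cong_mem)

lemma AS_diag_nonzero: "AS P \<beta> S $ j $ j \<noteq> 0"
proof
  assume "AS P \<beta> S $ j $ j = 0"
  then have "(\<lambda>l. resolvent P \<beta> S $ l $ j) = (\<lambda>_. 0)"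
    by (intro stopped_op_eq_0_imp_eq_0[of "insert j S"]) (simp add: stopped_op_insert_resolvent)
  then show False using stopped_op_resolvent[of S j j] j_nonmem by (simp add: stopped_op_def)
qed

lemma stopped_op_insert_solution:
  assumes "\<And>i. i \<noteq> j \<Longrightarrow> stopped_op P \<beta> (insert j S) z i = stopped_op P \<beta> S x i"
  shows "z = (\<lambda>l. x l + (stopped_op P \<beta> (insert j S) z j - stopped_op P \<beta> (insert j S) x j)
                        / AS P \<beta> S $ j $ j * resolvent P \<beta> S $ l $ j)"
    (is "_ = (\<lambda>l. x l + ?\<kappa> * ?c l)")
proof (rule stopped_op_inj[of "insert j S"])
  fix i
  have "stopped_op P \<beta> (insert j S) z i
      = stopped_op P \<beta> (insert j S) x i + ?\<kappa> * stopped_op P \<beta> (insert j S) ?c i"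
    using AS_diag_nonzero assms[of i]
    by (cases "i = j") (simp_all add: stopped_op_insert_resolvent stopped_op_insert_other)
  then show "stopped_op P \<beta> (insert j S) z i = stopped_op P \<beta> (insert j S) (\<lambda>l. x l + ?\<kappa> * ?c l) i"
    by (simp only: stopped_op_add_scaled)
qed

lemma resolvent_insert_col:
  assumes "k \<noteq> j"
  shows "(\<lambda>l. resolvent P \<beta> (insert j S) $ l $ k)
    = (\<lambda>l. resolvent P \<beta> S $ l $ k + - (AS P \<beta> S $ j $ k / AS P \<beta> S $ j $ j) * resolvent P \<beta> S $ l $ j)"
proof -
  have old: "stopped_op P \<beta> (insert j S) (\<lambda>l. resolvent P \<beta> S $ l $ k) j = AS P \<beta> S $ j $ k"
    using j_nonmem by (simp add: AS_entry stopped_op_cong_mem)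
  have "(\<lambda>l. resolvent P \<beta> (insert j S) $ l $ k)
      = (\<lambda>l. resolvent P \<beta> S $ l $ k + (0 - AS P \<beta> S $ j $ k) / AS P \<beta> S $ j $ j * resolvent P \<beta> S $ l $ j)"
    by (subst stopped_op_insert_solution[of _ "\<lambda>l. resolvent P \<beta> S $ l $ k"])
      (simp_all only: old stopped_op_resolvent stopped_op_insert_other if_not_P[OF assms[symmetric]])
  then show ?thesis by simp
qed

lemma resolvent_insert_col_self:
  "(\<lambda>l. resolvent P \<beta> (insert j S) $ l $ j) = (\<lambda>l. 1 / AS P \<beta> S $ j $ j * resolvent P \<beta> S $ l $ j)"
  by (subst stopped_op_insert_solution[of _ "\<lambda>_. 0"])
    (simp_all add: stopped_op_resolvent stopped_op_insert_other, simp_all add: stopped_op_def)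

lemma fS_insert:
  "fS P \<beta> R (insert j S)
     = (\<lambda>l. fS P \<beta> R S l + rS P \<beta> R S j / AS P \<beta> S $ j $ j * resolvent P \<beta> S $ l $ j)"
proof -
  have "fS P \<beta> R S j = 0" using fS_fixpoint[of R S j] j_nonmem by simp
  then have "R j - stopped_op P \<beta> (insert j S) (fS P \<beta> R S) j = rS P \<beta> R S j"
    by (simp add: rS_def stopped_op_def)
  then show ?thesis
    by (subst stopped_op_insert_solution[of _ "fS P \<beta> R S"])
      (simp_all add: stopped_op_fS stopped_op_insert_other)
qed

lemma AS_insert_entry:
  assumes "i \<noteq> j" and "k \<noteq> j"
  shows "AS P \<beta> (insert j S) $ i $ k
    = AS P \<beta> S $ i $ k - AS P \<beta> S $ i $ j * AS P \<beta> S $ j $ k / AS P \<beta> S $ j $ j"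
proof -
  have "AS P \<beta> (insert j S) $ i $ k = stopped_op P \<beta> (- S) (\<lambda>l. resolvent P \<beta> (insert j S) $ l $ k) i"
    using assms(1) by (simp add: AS_entry stopped_op_compl_insert)
  also have "\<dots> = AS P \<beta> S $ i $ k + - (AS P \<beta> S $ j $ k / AS P \<beta> S $ j $ j) * AS P \<beta> S $ i $ j"
    by (simp only: resolvent_insert_col[OF assms(2)] stopped_op_add_scaled AS_entry)
  finally show ?thesis by simp
qed

lemma AS_insert_entry_self:
  assumes "i \<noteq> j"
  shows "AS P \<beta> (insert j S) $ i $ j = AS P \<beta> S $ i $ j / AS P \<beta> S $ j $ j"
proof -
  have "AS P \<beta> (insert j S) $ i $ j = stopped_op P \<beta> (- S) (\<lambda>l. resolvent P \<beta> (insert j S) $ l $ j) i"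
    using assms by (simp add: AS_entry stopped_op_compl_insert)
  also have "\<dots> = 1 / AS P \<beta> S $ j $ j * AS P \<beta> S $ i $ j"
    by (simp only: resolvent_insert_col_self stopped_op_scale AS_entry)
  finally show ?thesis by simp
qed

lemma stopped_op_fS_insert:
  assumes "i \<noteq> j"
  shows "stopped_op P \<beta> (- insert j S) (fS P \<beta> R (insert j S)) i
    = stopped_op P \<beta> (- S) (fS P \<beta> R S) i + rS P \<beta> R S j / AS P \<beta> S $ j $ j * AS P \<beta> S $ i $ j"
proof -
  have "stopped_op P \<beta> (- insert j S) (fS P \<beta> R (insert j S)) i
      = stopped_op P \<beta> (- S) (fS P \<beta> R (insert j S)) i"
    using assms by (rule stopped_op_compl_insert)
  then show ?thesis by (simp only: fS_insert stopped_op_add_scaled AS_entry)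
qed

lemma rS_insert_mem:
  assumes "i \<in> S"
  shows "rS P \<beta> R (insert j S) i = rS P \<beta> R S i + rS P \<beta> R S j / AS P \<beta> S $ j $ j * AS P \<beta> S $ i $ j"
  using assms j_nonmem stopped_op_fS_insert[of i R]
  by (auto simp: rS_eq_stopped_op[of R "insert j S" i] rS_eq_stopped_op[of R S i])

lemma rS_insert_nonmem:
  assumes "i \<noteq> j" and "i \<notin> S"
  shows "rS P \<beta> R (insert j S) i = rS P \<beta> R S i - rS P \<beta> R S j / AS P \<beta> S $ j $ j * AS P \<beta> S $ i $ j"
  using assms stopped_op_fS_insert[of i R]
  by (auto simp: rS_eq_stopped_op[of R "insert j S" i] rS_eq_stopped_op[of R S i])

lemma rS_insert_self: "rS P \<beta> R (insert j S) j = rS P \<beta> R S j / AS P \<beta> S $ j $ j"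
proof -
  have "fS P \<beta> R S j = 0" using fS_fixpoint[of R S j] j_nonmem by simp
  then show ?thesis
    using j_nonmem discount_less_1
    by (simp add: rS_eq_stopped_op fS_insert stopped_op_def resolvent_diag_nonmem)
qed

end

end

lemma wS_eq_rS: "wS P \<beta> S i = rS P \<beta> (\<lambda>_. 1) S i"
  by (simp add: wS_def rS_def gS_def)

theorem mainTheorem9:
  fixes P :: "real^'n^'n" and \<beta> :: real and R :: "'n \<Rightarrow> real"
    and S :: "'n set" and j :: 'n
  assumes "stochastic P" and "0 < \<beta>" and "\<beta> < 1" and "j \<notin> S"
  defines "A \<equiv> AS P \<beta> S" and "A' \<equiv> AS P \<beta> (insert j S)"
    and "T \<equiv> - S - {j}"
  shows "A $ j $ j \<noteq> 0
    \<and> (\<forall>i\<in>T. \<forall>k\<in>S. A' $ i $ k = A $ i $ k - A $ i $ j * A $ j $ k / A $ j $ j)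
    \<and> (\<forall>i\<in>T. A' $ i $ j = A $ i $ j / A $ j $ j)
    \<and> (\<forall>i\<in>S. wS P \<beta> (insert j S) i = wS P \<beta> S i + wS P \<beta> S j / A $ j $ j * A $ i $ j)
    \<and> wS P \<beta> (insert j S) j = wS P \<beta> S j / A $ j $ j
    \<and> (\<forall>i\<in>T. wS P \<beta> (insert j S) i = wS P \<beta> S i - wS P \<beta> S j / A $ j $ j * A $ i $ j)
    \<and> (\<forall>i\<in>S. rS P \<beta> R (insert j S) i = rS P \<beta> R S i + rS P \<beta> R S j / A $ j $ j * A $ i $ j)
    \<and> rS P \<beta> R (insert j S) j = rS P \<beta> R S j / A $ j $ j
    \<and> (\<forall>i\<in>T. rS P \<beta> R (insert j S) i = rS P \<beta> R S i - rS P \<beta> R S j / A $ j $ j * A $ i $ j)"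
proof -
  interpret discounted_chain P \<beta>
    using assms(1-3) by unfold_locales simp_all
  have T_ne: "i \<noteq> j" and T_nonmem: "i \<notin> S" if "i \<in> T" for i
    using that unfolding T_def by auto
  have S_ne: "k \<noteq> j" if "k \<in> S" for k
    using that assms(4) by auto
  show ?thesis
    unfolding A_def A'_def wS_eq_rS using assms(4)
    by (simp add: T_ne T_nonmem S_ne AS_diag_nonzero AS_insert_entry AS_insert_entry_self
        rS_insert_mem rS_insert_nonmem rS_insert_self)
qed

end
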